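(* Consider the power network system described in the context, and let the switching vector $\sigma$ be held at an arbitrary constant value in $\{0,1\}^{|\tilde{\mathcal L}|}$. Then every equilibrium $(\eta^*,\omega^*,p^{M,*},p^{c,*},\psi^* )$ of the system satisfies $\omega^*=\mathbf 0_{|\mathcal N|}$ and $p^{c,*}\in\operatorname{Im}(\mathbf 1_{|\mathcal N|})$, i.e. $p^{c,*}_1=\dots=p^{c,*}_{|\mathcal N|}$.
   Context: Let $(\mathcal N,\mathcal E)$ be a connected directed graph (the power network) with bus set $\mathcal N=\{1,\dots,|\mathcal N|\}$ and line set $\mathcal E\subseteq\mathcal N\times\mathcal N$, oriented arbitrarily so that $(i,j)\in\mathcal E$ implies $(j,i)\notin\mathcal E$; write $\mathcal N^p_j=\{k:(k,j)\in\mathcal E\}$ and $\mathcal N^s_j=\{k:(j,k)\in\mathcal E\}$. Let $(\mathcal N,\tilde{\mathcal E})$ be a connected directed graph (the communication network) on the same vertex set. For each $j\in\mathcal N$ let $\mathcal L_j$ be a finite set of on-off loads at bus $j$ and $\tilde{\mathcal L}=\{(l,j): l\in\mathcal L_j,\ j\in\mathcal N\}$; each load $(l,j)$ has magnitude $\overline d_{l,j}>0$ and switching state $\sigma_{l,j}\in\{0,1\}$. Constants: $M_j,\gamma_j,\kappa_j,A_j,\tau_j>0$ and $p^L_j\in\mathbb R$ for $j\in\mathcal N$; $B_{ij}>0$ for $(i,j)\in\mathcal E$; $\tau_{ij}>0$ for $(i,j)\in\tilde{\mathcal E}$. The state is $x=(\eta,\omega,p^M,p^c,\psi)$ with $\eta=(\eta_{ij})_{(i,j)\in\mathcal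 E}$, $\omega,p^M,p^c\in\mathbb R^{|\mathcal N|}$, $\psi=(\psi_{ij})_{(i,j)\in\tilde{\mathcal E}}$, and the dynamics are $\dot\eta_{ij}=\omega_i-\omega_j$ for $(i,j)\in\mathcal E$; $M_j\dot\omega_j=p^M_j-p^L_j-d^u_j-\sum_{l\in\mathcal L_j}d^c_{l,j}-\sum_{k\in\mathcal N^s_j}p_{jk}+\sum_{i\in\mathcal N^p_j}p_{ij}$ for $j\in\mathcal N$; $p_{ij}=B_{ij}\eta_{ij}$; $\gamma_j\dot p^M_j=-(p^M_j+\kappa_j\omega_j-\kappa_jp^c_j)$; $d^u_j=A_j\omega_j$; $d^c_{l,j}=\overline d_{l,j}\sigma_{l,j}$; $\tau_{ij}\dot\psi_{ij}=p^c_i-p^c_j$ for $(i,j)\in\tilde{\mathcal E}$; $\tau_j\dot p^c_j=-p^M_j+p^L_j+\sum_{l\in\mathcal L_j}d^c_{l,j}-\sum_{k:(j,k)\in\tilde{\mathcal E}}\psi_{jk}+\sum_{i:(i,j)\in\tilde{\mathcal E}}\psi_{ij}$ for $j\in\mathcal N$. An equilibrium (for fixed $\sigma$) is a state at which all time derivatives vanish. *)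

theory Defs
  imports Complex_Main
begin

definition weakly_connected :: "'n set \<Rightarrow> ('n \<times> 'n) set \<Rightarrow> bool" where
  "weakly_connected V E \<longleftrightarrow> E \<subseteq> V \<times> V \<and> (\<forall>i\<in>V. \<forall>j\<in>V. (i, j) \<in> (E \<union> E\<inverse>)\<^sup>*)"

text \<open>The vector field of the power network with state
  (eta, omega, pM, pc, psi) and fixed switching state sigma.
  Each component returns the time derivative of the corresponding state variable.\<close>

definition d_eta :: "('n \<Rightarrow> real) \<Rightarrow> 'n \<Rightarrow> 'n \<Rightarrow> real" where
  "d_eta \<omega> i j = \<omega> i - \<omega> j"

definition d_omega ::
  "('n \<times> 'n) set \<Rightarrow> ('n \<Rightarrow> 'l set) \<Rightarrow> ('n \<Rightarrow> real) \<Rightarrow> ('n \<Rightarrow> real) \<Rightarrow> ('n \<Rightarrow> real)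
   \<Rightarrow> ('n \<times> 'n \<Rightarrow> real) \<Rightarrow> ('l \<Rightarrow> 'n \<Rightarrow> real) \<Rightarrow> ('l \<Rightarrow> 'n \<Rightarrow> real)
   \<Rightarrow> ('n \<times> 'n \<Rightarrow> real) \<Rightarrow> ('n \<Rightarrow> real) \<Rightarrow> ('n \<Rightarrow> real) \<Rightarrow> 'n \<Rightarrow> real" where
  "d_omega E L M pL A B dbar \<sigma> \<eta> \<omega> pM j =
     (pM j - pL j - A j * \<omega> j - (\<Sum>l\<in>L j. dbar l j * \<sigma> l j)
      - (\<Sum>k\<in>{k. (j, k) \<in> E}. B (j, k) * \<eta> (j, k))
      + (\<Sum>i\<in>{i. (i, j) \<in> E}. B (i, j) * \<eta> (i, j))) / M j"

definition d_pM :: "('n \<Rightarrow> real) \<Rightarrow> ('n \<Rightarrow> real) \<Rightarrow> ('n \<Rightarrow> real) \<Rightarrow> ('n \<Rightarrow> real)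
   \<Rightarrow> ('n \<Rightarrow> real) \<Rightarrow> 'n \<Rightarrow> real" where
  "d_pM \<gamma> \<kappa> \<omega> pM pc j = - (pM j + \<kappa> j * \<omega> j - \<kappa> j * pc j) / \<gamma> j"

definition d_psi :: "('n \<times> 'n \<Rightarrow> real) \<Rightarrow> ('n \<Rightarrow> real) \<Rightarrow> 'n \<Rightarrow> 'n \<Rightarrow> real" where
  "d_psi \<tau>e pc i j = (pc i - pc j) / \<tau>e (i, j)"

definition d_pc ::
  "('n \<times> 'n) set \<Rightarrow> ('n \<Rightarrow> 'l set) \<Rightarrow> ('n \<Rightarrow> real) \<Rightarrow> ('n \<Rightarrow> real)
   \<Rightarrow> ('l \<Rightarrow> 'n \<Rightarrow> real) \<Rightarrow> ('l \<Rightarrow> 'n \<Rightarrow> real)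
   \<Rightarrow> ('n \<Rightarrow> real) \<Rightarrow> ('n \<times> 'n \<Rightarrow> real) \<Rightarrow> 'n \<Rightarrow> real" where
  "d_pc Et L \<tau> pL dbar \<sigma> pM \<psi> j =
     (- pM j + pL j + (\<Sum>l\<in>L j. dbar l j * \<sigma> l j)
      - (\<Sum>k\<in>{k. (j, k) \<in> Et}. \<psi> (j, k))
      + (\<Sum>i\<in>{i. (i, j) \<in> Et}. \<psi> (i, j))) / \<tau> j"

definition is_equilibrium ::
  "'n set \<Rightarrow> ('n \<times> 'n) set \<Rightarrow> ('n \<times> 'n) set \<Rightarrow> ('n \<Rightarrow> 'l set)
   \<Rightarrow> ('n \<Rightarrow> real) \<Rightarrow> ('n \<Rightarrow> real) \<Rightarrow> ('n \<Rightarrow> real) \<Rightarrow> ('n \<Rightarrow> real) \<Rightarrow> ('n \<Rightarrow> real)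
   \<Rightarrow> ('n \<Rightarrow> real) \<Rightarrow> ('n \<times> 'n \<Rightarrow> real) \<Rightarrow> ('n \<times> 'n \<Rightarrow> real)
   \<Rightarrow> ('l \<Rightarrow> 'n \<Rightarrow> real) \<Rightarrow> ('l \<Rightarrow> 'n \<Rightarrow> real)
   \<Rightarrow> ('n \<times> 'n \<Rightarrow> real) \<Rightarrow> ('n \<Rightarrow> real) \<Rightarrow> ('n \<Rightarrow> real) \<Rightarrow> ('n \<Rightarrow> real)
   \<Rightarrow> ('n \<times> 'n \<Rightarrow> real) \<Rightarrow> bool" where
  "is_equilibrium N E Et L M \<gamma> \<kappa> A \<tau> pL B \<tau>e dbar \<sigma> \<eta> \<omega> pM pc \<psi> \<longleftrightarrow>
     (\<forall>(i, j)\<in>E. d_eta \<omega> i j = 0) \<and>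
     (\<forall>j\<in>N. d_omega E L M pL A B dbar \<sigma> \<eta> \<omega> pM j = 0) \<and>
     (\<forall>j\<in>N. d_pM \<gamma> \<kappa> \<omega> pM pc j = 0) \<and>
     (\<forall>(i, j)\<in>Et. d_psi \<tau>e pc i j = 0) \<and>
     (\<forall>j\<in>N. d_pc Et L \<tau> pL dbar \<sigma> pM \<psi> j = 0)"

end

theory Submission
  imports Defs
begin

text \<open>Along each line and each communication link the equilibrium equations force equal
  frequencies and equal controller outputs, so both are constant by connectivity. Adding the
  frequency and controller equations at a bus cancels mechanical power, the fixed load and the
  controlled loads; summing over all buses then cancels line and communication flows, since
  every flow leaves one bus and enters another. What remains is the total damping A \<omega>,
  which vanishes only for zero frequency.\<close>

lemma weakly_connected_const:
  assumes "weakly_connected N E" and "\<And>i j. (i, j) \<in> E \<Longrightarrow> f i = f j"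
    and "i \<in> N" "j \<in> N"
  shows "f i = f j"
proof -
  have "(i, j) \<in> (E \<union> E\<inverse>)\<^sup>*"
    using assms(1,3,4) unfolding weakly_connected_def by blast
  then show ?thesis
  proof (induction rule: rtrancl_induct)
    case base
    then show ?case by simp
  next
    case (step y z)
    then show ?case using assms(2) by fastforce
  qed
qed

lemma sum_outflows_eq_sum_inflows:
  fixes g :: "'n \<times> 'n \<Rightarrow> 'a::comm_monoid_add"
  assumes "finite N" and "E \<subseteq> N \<times> N"
  shows "(\<Sum>j\<in>N. \<Sum>k\<in>{k. (j, k) \<in> E}. g (j, k)) = (\<Sum>j\<in>N. \<Sum>i\<in>{i. (i, j) \<in> E}. g (i, j))"
proof -
  have out: "{k. (j, k) \<in> E} = {k\<in>N. (j, k) \<in> E}" and inc: "{i. (i, j) \<in> E} = {i\<in>N. (i, j) \<in> E}"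
    for j using assms(2) by blast+
  show ?thesis
    unfolding out inc sum.inter_filter[OF assms(1)] by (rule sum.swap)
qed

lemma equilibrium_sum_damping_eq_0:
  assumes "finite N" and "E \<subseteq> N \<times> N" and "Et \<subseteq> N \<times> N"
    and "\<And>j. j \<in> N \<Longrightarrow> M j > 0" and "\<And>j. j \<in> N \<Longrightarrow> \<tau> j > 0"
    and "is_equilibrium N E Et L M \<gamma> \<kappa> A \<tau> pL B \<tau>e dbar \<sigma> \<eta> \<omega> pM pc \<psi>"
  shows "(\<Sum>j\<in>N. A j * \<omega> j) = 0"
proof -
  define line_out where "line_out j = (\<Sum>k\<in>{k. (j, k) \<in> E}. B (j, k) * \<eta> (j, k))" for j
  define line_in where "line_in j = (\<Sum>i\<in>{i. (i, j) \<in> E}. B (i, j) * \<eta> (i, j))" for j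
  define comm_out where "comm_out j = (\<Sum>k\<in>{k. (j, k) \<in> Et}. \<psi> (j, k))" for j
  define comm_in where "comm_in j = (\<Sum>i\<in>{i. (i, j) \<in> Et}. \<psi> (i, j))" for j
  define load where "load j = (\<Sum>l\<in>L j. dbar l j * \<sigma> l j)" for j
  have bus: "A j * \<omega> j = (line_in j - line_out j) + (comm_in j - comm_out j)" if "j \<in> N" for j
  proof -
    have "d_omega E L M pL A B dbar \<sigma> \<eta> \<omega> pM j = 0"
      and "d_pc Et L \<tau> pL dbar \<sigma> pM \<psi> j = 0"
      using assms(6) that unfolding is_equilibrium_def by auto
    then have "pM j - pL j - A j * \<omega> j - load j - line_out j + line_in j = 0"
      and "- pM j + pL j + load j - comm_out j + comm_in j = 0"
      using assms(4,5)[OF that]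
      unfolding d_omega_def d_pc_def load_def line_out_def line_in_def comm_out_def comm_in_def
      by auto
    then show ?thesis by linarith
  qed
  have "(\<Sum>j\<in>N. A j * \<omega> j)
      = ((\<Sum>j\<in>N. line_in j) - (\<Sum>j\<in>N. line_out j)) + ((\<Sum>j\<in>N. comm_in j) - (\<Sum>j\<in>N. comm_out j))"
    using bus by (simp add: sum.distrib sum_subtractf)
  also have "\<dots> = 0"
    unfolding line_out_def line_in_def comm_out_def comm_in_def
    using sum_outflows_eq_sum_inflows[OF assms(1,2), of "\<lambda>e. B e * \<eta> e"]
      sum_outflows_eq_sum_inflows[OF assms(1,3), of \<psi>]
    by simp
  finally show ?thesis .
qed

theorem lemma1:
  fixes N :: "'n set" and E Et :: "('n \<times> 'n) set" and L :: "'n \<Rightarrow> 'l set"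
    and M \<gamma> \<kappa> A \<tau> pL :: "'n \<Rightarrow> real"
    and B \<tau>e :: "'n \<times> 'n \<Rightarrow> real"
    and dbar \<sigma> :: "'l \<Rightarrow> 'n \<Rightarrow> real"
    and \<eta> \<psi> :: "'n \<times> 'n \<Rightarrow> real" and \<omega> pM pc :: "'n \<Rightarrow> real"
  assumes finN: "finite N" and neN: "N \<noteq> {}"
    and connE: "weakly_connected N E"
    and orient: "\<And>i j. (i, j) \<in> E \<Longrightarrow> (j, i) \<notin> E"
    and connEt: "weakly_connected N Et"
    and finL: "\<And>j. j \<in> N \<Longrightarrow> finite (L j)"
    and dbar_pos: "\<And>j l. j \<in> N \<Longrightarrow> l \<in> L j \<Longrightarrow> dbar l j > 0"
    and sigma01: "\<And>j l. j \<in> N \<Longrightarrow> l \<in> L j \<Longrightarrow> \<sigma> l j \<in> {0, 1}"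
    and M_pos: "\<And>j. j \<in> N \<Longrightarrow> M j > 0"
    and \<gamma>_pos: "\<And>j. j \<in> N \<Longrightarrow> \<gamma> j > 0"
    and \<kappa>_pos: "\<And>j. j \<in> N \<Longrightarrow> \<kappa> j > 0"
    and A_pos: "\<And>j. j \<in> N \<Longrightarrow> A j > 0"
    and \<tau>_pos: "\<And>j. j \<in> N \<Longrightarrow> \<tau> j > 0"
    and B_pos: "\<And>e. e \<in> E \<Longrightarrow> B e > 0"
    and \<tau>e_pos: "\<And>e. e \<in> Et \<Longrightarrow> \<tau>e e > 0"
    and eq: "is_equilibrium N E Et L M \<gamma> \<kappa> A \<tau> pL B \<tau>e dbar \<sigma> \<eta> \<omega> pM pc \<psi>"
  shows "(\<forall>j\<in>N. \<omega> j = 0) \<and> (\<forall>i\<in>N. \<forall>j\<in>N. pc i = pc j)"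
proof -
  have pc_const: "pc i = pc j" if "i \<in> N" "j \<in> N" for i j
  proof (rule weakly_connected_const[OF connEt _ that])
    fix i j assume ij: "(i, j) \<in> Et"
    then have "(pc i - pc j) / \<tau>e (i, j) = 0"
      using eq unfolding is_equilibrium_def d_psi_def by auto
    then show "pc i = pc j" using \<tau>e_pos[OF ij] by simp
  qed
  obtain j0 where j0: "j0 \<in> N" using neN by blast
  have \<omega>_const: "\<omega> j = \<omega> j0" if "j \<in> N" for j
  proof (rule weakly_connected_const[OF connE _ that j0])
    fix i j assume "(i, j) \<in> E"
    then show "\<omega> i = \<omega> j" using eq unfolding is_equilibrium_def d_eta_def by auto
  qed
  have "(\<Sum>j\<in>N. A j) * \<omega> j0 = (\<Sum>j\<in>N. A j * \<omega> j)"
    using \<omega>_const by (simp add: sum_distrib_right)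
  also have "\<dots> = 0"
    using connE connEt unfolding weakly_connected_def
    by (intro equilibrium_sum_damping_eq_0[OF finN _ _ M_pos \<tau>_pos eq]) auto
  finally have "(\<Sum>j\<in>N. A j) * \<omega> j0 = 0" .
  moreover have "(\<Sum>j\<in>N. A j) > 0"
    using A_pos finN neN by (simp add: sum_pos)
  ultimately have "\<omega> j0 = 0" by simp
  then show ?thesis using \<omega>_const pc_const by metis
qed

end
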